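(* Let $X=\{a,b\}$ and consider the following commutative Frobenius objects in $\mathbf{Rel}$ on $X$: (1) $\eta=\varepsilon=\{a\}$, $\tilde\mu(a,a)=\{a\}$, $\tilde\mu(a,b)=\tilde\mu(b,a)=\{b\}$, $\tilde\mu(b,b)=\{a\}$; (2) $\eta=\varepsilon=\{a\}$, same as (1) except $\tilde\mu(b,b)=\{a,b\}$; (3) $\eta=\{a\}$, $\varepsilon=\{b\}$, $\tilde\mu(a,a)=\{a\}$, $\tilde\mu(a,b)=\tilde\mu(b,a)=\{b\}$, $\tilde\mu(b,b)=\{a\}$; (4) $\eta=\{a\}$, $\varepsilon=\{b\}$, same as (3) except $\tilde\mu(b,b)=\emptyset$; (5) $\eta=\varepsilon=\{a,b\}$, $\tilde\mu(a,a)=\{a\}$, $\tilde\mu(b,b)=\{b\}$, $\tilde\mu(a,b)=\tilde\mu(b,a)=\emptyset$. Then, for integers $g\ge 0$, their partition functions are: for (1), (2), (5), $Z(\Sigma_g)=T$ for all $g$; for (3), $Z(\Sigma_g)=T$ if and only if $g$ is odd; for (4), $Z(\Sigma_g)=T$ if and only if $g=1$.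
   Context: $\mathbf{Rel}$ is the symmetric monoidal category of sets and relations ($S\circ R=\{(x,z):\exists y,(x,y)\in R,(y,z)\in S\}$, identities are diagonals, product is Cartesian product, unit $\{\bullet\}$). A relation $R\subseteq X\times Y$ is identified with $\tilde R:X\to\mathcal{P}(Y)$. A Frobenius object in $\mathbf{Rel}$ is a set $X$ with unit $\eta\subseteq X$ (relation $\{\bullet\}\to X$), counit $\varepsilon\subseteq X$ (relation $X\to\{\bullet\}$) and multiplication $\mu$ (relation $X\times X\to X$, with map $\tilde\mu$) satisfying unitality, associativity, and nondegeneracy: there is a (unique) relation $\beta:\{\bullet\}\to X\times X$ with $(\varepsilon\times\mathbf{1})\circ(\mu\times\mathbf{1})\circ(\mathbf{1}\times\beta)=(\mathbf{1}\times\varepsilon)\circ(\mathbf{1}\times\mu)\circ(\beta\times\mathbf{1})=\mathbf{1}$. The comultiplication is $\delta=(\mathbf{1}\times\mu)\circ(\beta\times\mathbf{1})$. Commutative means $\tilde\mu(x,y)=\tilde\mu(y,x)$. The partition function on the closed orientable surface of genus $g$ is $Z(\Sigma_g)=\varepsilon\circ(\mu\circ\delta)^g\circ\eta\in\{\emptyset,\{\bullet\}\}$, with $\emptyset$ read as $F$ and $\{\bullet\}$ as $T$. *)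

theory Defs
  imports Main
begin

text \<open>A relation from X to Y is a set of pairs. The singleton object is the type unit.
  Composition in the paper's order: S \<circ>r R = {(x,z). \<exists>y. (x,y)\<in>R \<and> (y,z)\<in>S} = R O S.\<close>

definition rcomp :: "('b \<times> 'c) set \<Rightarrow> ('a \<times> 'b) set \<Rightarrow> ('a \<times> 'c) set" (infixr "\<circ>r" 75)
  where "S \<circ>r R = R O S"

definition tens :: "('a \<times> 'b) set \<Rightarrow> ('c \<times> 'd) set \<Rightarrow> (('a \<times> 'c) \<times> ('b \<times> 'd)) set"
  (infixr "\<otimes>r" 80)
  where "R \<otimes>r S = {((x,y),(x',y')). (x,x') \<in> R \<and> (y,y') \<in> S}"

definition assoc :: "((('a \<times> 'b) \<times> 'c) \<times> ('a \<times> ('b \<times> 'c))) set"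
  where "assoc = {(((x,y),z),(x,(y,z))) | x y z. True}"

definition lunit :: "((unit \<times> 'a) \<times> 'a) set"
  where "lunit = {(((),x),x) | x. True}"

definition runit :: "(('a \<times> unit) \<times> 'a) set"
  where "runit = {((x,()),x) | x. True}"

text \<open>Unit \<eta> : {\<bullet>} \<rightarrow> X, counit \<epsilon> : X \<rightarrow> {\<bullet>}, multiplication \<mu> : X\<times>X \<rightarrow> X,
  given by a subset of X, a subset of X and the map \<mu>~ : X \<times> X \<rightarrow> P(X).\<close>

definition unit_rel :: "'a set \<Rightarrow> (unit \<times> 'a) set"
  where "unit_rel E = {((),x) | x. x \<in> E}"

definition counit_rel :: "'a set \<Rightarrow> ('a \<times> unit) set"
  where "counit_rel E = {(x,()) | x. x \<in> E}"

definition mult_rel :: "('a \<Rightarrow> 'a \<Rightarrow> 'a set) \<Rightarrow> (('a \<times> 'a) \<times> 'a) set"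
  where "mult_rel m = {((x,y),z) | x y z. z \<in> m x y}"

definition nondeg_eqs ::
  "('a \<times> unit) set \<Rightarrow> (('a \<times> 'a) \<times> 'a) set \<Rightarrow> (unit \<times> ('a \<times> 'a)) set \<Rightarrow> bool"
  where "nondeg_eqs \<epsilon> \<mu> \<beta> \<longleftrightarrow>
     lunit \<circ>r (\<epsilon> \<otimes>r Id) \<circ>r (\<mu> \<otimes>r Id) \<circ>r converse assoc \<circ>r (Id \<otimes>r \<beta>) \<circ>r converse runit = Id
   \<and> runit \<circ>r (Id \<otimes>r \<epsilon>) \<circ>r (Id \<otimes>r \<mu>) \<circ>r assoc \<circ>r (\<beta> \<otimes>r Id) \<circ>r converse lunit = Id"

definition frobenius_object ::
  "(unit \<times> 'a) set \<Rightarrow> ('a \<times> unit) set \<Rightarrow> (('a \<times> 'a) \<times> 'a) set \<Rightarrow> bool"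
  where "frobenius_object \<eta> \<epsilon> \<mu> \<longleftrightarrow>
     \<comment> \<open>unitality\<close>
     \<mu> \<circ>r (\<eta> \<otimes>r Id) \<circ>r converse lunit = Id
   \<and> \<mu> \<circ>r (Id \<otimes>r \<eta>) \<circ>r converse runit = Id
     \<comment> \<open>associativity\<close>
   \<and> \<mu> \<circ>r (\<mu> \<otimes>r Id) = \<mu> \<circ>r (Id \<otimes>r \<mu>) \<circ>r assoc
     \<comment> \<open>nondegeneracy\<close>
   \<and> (\<exists>!\<beta>. nondeg_eqs \<epsilon> \<mu> \<beta>)"

definition frob_beta :: "('a \<times> unit) set \<Rightarrow> (('a \<times> 'a) \<times> 'a) set \<Rightarrow> (unit \<times> ('a \<times> 'a)) set"
  where "frob_beta \<epsilon> \<mu> = (THE \<beta>. nondeg_eqs \<epsilon> \<mu> \<beta>)"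

text \<open>Comultiplication \<delta> = (1 \<times> \<mu>) \<circ> (\<beta> \<times> 1), with the unitor/associator made explicit.\<close>
definition comult :: "('a \<times> unit) set \<Rightarrow> (('a \<times> 'a) \<times> 'a) set \<Rightarrow> ('a \<times> ('a \<times> 'a)) set"
  where "comult \<epsilon> \<mu> = (Id \<otimes>r \<mu>) \<circ>r assoc \<circ>r (frob_beta \<epsilon> \<mu> \<otimes>r Id) \<circ>r converse lunit"

definition commutative_mult :: "('a \<Rightarrow> 'a \<Rightarrow> 'a set) \<Rightarrow> bool"
  where "commutative_mult m \<longleftrightarrow> (\<forall>x y. m x y = m y x)"

text \<open>Partition function Z(\<Sigma>_g) = \<epsilon> \<circ> (\<mu> \<circ> \<delta>)^g \<circ> \<eta>; a relation {\<bullet>} \<rightarrow> {\<bullet>}.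
  The value T corresponds to {((),())}, F to {}.\<close>
definition partition_fn ::
  "(unit \<times> 'a) set \<Rightarrow> ('a \<times> unit) set \<Rightarrow> (('a \<times> 'a) \<times> 'a) set \<Rightarrow> nat \<Rightarrow> (unit \<times> unit) set"
  where "partition_fn \<eta> \<epsilon> \<mu> g = \<epsilon> \<circ>r ((\<mu> \<circ>r comult \<epsilon> \<mu>) ^^ g) \<circ>r \<eta>"

abbreviation Z_true :: "(unit \<times> unit) set" ("T\<^sub>Z")
  where "T\<^sub>Z \<equiv> {((),())}"

datatype X2 = A | B

definition m1 :: "X2 \<Rightarrow> X2 \<Rightarrow> X2 set" where
  "m1 x y = (case (x,y) of (A,A) \<Rightarrow> {A} | (A,B) \<Rightarrow> {B} | (B,A) \<Rightarrow> {B} | (B,B) \<Rightarrow> {A})"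
definition m2 :: "X2 \<Rightarrow> X2 \<Rightarrow> X2 set" where
  "m2 x y = (case (x,y) of (A,A) \<Rightarrow> {A} | (A,B) \<Rightarrow> {B} | (B,A) \<Rightarrow> {B} | (B,B) \<Rightarrow> {A,B})"
definition m3 :: "X2 \<Rightarrow> X2 \<Rightarrow> X2 set" where
  "m3 x y = (case (x,y) of (A,A) \<Rightarrow> {A} | (A,B) \<Rightarrow> {B} | (B,A) \<Rightarrow> {B} | (B,B) \<Rightarrow> {A})"
definition m4 :: "X2 \<Rightarrow> X2 \<Rightarrow> X2 set" where
  "m4 x y = (case (x,y) of (A,A) \<Rightarrow> {A} | (A,B) \<Rightarrow> {B} | (B,A) \<Rightarrow> {B} | (B,B) \<Rightarrow> {})"
definition m5 :: "X2 \<Rightarrow> X2 \<Rightarrow> X2 set" where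
  "m5 x y = (case (x,y) of (A,A) \<Rightarrow> {A} | (A,B) \<Rightarrow> {} | (B,A) \<Rightarrow> {} | (B,B) \<Rightarrow> {B})"

end

theory Submission
  imports Defs
begin

text \<open>For a counit F and a multiplication m, the two snake equations say exactly that the
  copairing \<beta>, read as a relation on X, is a two-sided inverse of the pairing \<epsilon> \<circ> \<mu> in the monoid
  of relations. Inverses are unique, so when the pairing is the graph of a bijection, \<beta> exists,
  is unique and is its converse. In the five examples the pairing is the identity or the swap
  of a and b, which gives the handle operator \<mu> \<circ> \<delta> explicitly: the identity in (1) and (5),
  the full relation in (2), the swap in (3) and {(a, b)} in (4). Finally Z(\<Sigma>_g) = T iff the
  g-th power of the handle operator relates a point of \<eta> to a point of \<epsilon>, and the powers of
  idempotent, involutive and square-zero relations are immediate.\<close>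

lemma mem_rcomp [simp]: "(a, c) \<in> S \<circ>r R \<longleftrightarrow> (\<exists>b. (a, b) \<in> R \<and> (b, c) \<in> S)"
  by (auto simp: rcomp_def)

lemma mem_tens [simp]: "((a, b), (c, d)) \<in> R \<otimes>r S \<longleftrightarrow> (a, c) \<in> R \<and> (b, d) \<in> S"
  by (auto simp: tens_def)

lemma mem_assoc [simp]: "(((a, b), c), (d, e, f)) \<in> assoc \<longleftrightarrow> a = d \<and> b = e \<and> c = f"
  by (auto simp: assoc_def)

lemma mem_lunit [simp]: "((u, a), b) \<in> lunit \<longleftrightarrow> a = b"
  by (auto simp: lunit_def)

lemma mem_runit [simp]: "((a, u), b) \<in> runit \<longleftrightarrow> a = b"
  by (auto simp: runit_def)

lemma mem_unit_rel [simp]: "(u, a) \<in> unit_rel E \<longleftrightarrow> a \<in> E"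
  by (auto simp: unit_rel_def)

lemma mem_counit_rel [simp]: "(a, u) \<in> counit_rel E \<longleftrightarrow> a \<in> E"
  by (auto simp: counit_rel_def)

lemma mem_mult_rel [simp]: "((a, b), c) \<in> mult_rel m \<longleftrightarrow> c \<in> m a b"
  by (auto simp: mult_rel_def)

definition pairing :: "'a set \<Rightarrow> ('a \<Rightarrow> 'a \<Rightarrow> 'a set) \<Rightarrow> ('a \<times> 'a) set"
  where "pairing F m = {(x, y). \<exists>u \<in> m x y. u \<in> F}"

lemma mult_rel_left_unit_iff:
  "mult_rel m \<circ>r (unit_rel E \<otimes>r Id) \<circ>r converse lunit = Id \<longleftrightarrow> (\<forall>x. (\<Union>e\<in>E. m e x) = {x})"
  by (simp add: set_eq_iff split_paired_All split_paired_Ex) (metis unit.exhaust)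

lemma mult_rel_right_unit_iff:
  "mult_rel m \<circ>r (Id \<otimes>r unit_rel E) \<circ>r converse runit = Id \<longleftrightarrow> (\<forall>x. (\<Union>e\<in>E. m x e) = {x})"
  by (simp add: set_eq_iff split_paired_All split_paired_Ex) (metis unit.exhaust)

lemma mult_rel_assoc_iff:
  "mult_rel m \<circ>r (mult_rel m \<otimes>r Id) = mult_rel m \<circ>r (Id \<otimes>r mult_rel m) \<circ>r assoc
   \<longleftrightarrow> (\<forall>x y z. (\<Union>u\<in>m x y. m u z) = (\<Union>u\<in>m y z. m x u))"
  by (simp add: set_eq_iff split_paired_All split_paired_Ex) metis

lemma nondeg_eqs_iff:
  "nondeg_eqs (counit_rel F) (mult_rel m) \<beta> \<longleftrightarrow>
     pairing F m O \<beta> `` {()} = Id \<and> \<beta> `` {()} O pairing F m = Id"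
proof -
  have "lunit \<circ>r (counit_rel F \<otimes>r Id) \<circ>r (mult_rel m \<otimes>r Id) \<circ>r converse assoc
          \<circ>r (Id \<otimes>r \<beta>) \<circ>r converse runit = pairing F m O \<beta> `` {()}"
    by (auto simp: pairing_def relcomp_unfold) blast+
  moreover have "runit \<circ>r (Id \<otimes>r counit_rel F) \<circ>r (Id \<otimes>r mult_rel m) \<circ>r assoc
          \<circ>r (\<beta> \<otimes>r Id) \<circ>r converse lunit = converse (\<beta> `` {()} O pairing F m)"
    by (auto simp: pairing_def relcomp_unfold) blast+
  ultimately show ?thesis
    by (metis converse_Id converse_converse nondeg_eqs_def)
qed

definition invertible_rel :: "('a \<times> 'a) set \<Rightarrow> bool"
  where "invertible_rel R \<longleftrightarrow> R O converse R = Id \<and> converse R O R = Id"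

lemma invertible_rel_Id: "invertible_rel Id"
  by (simp add: invertible_rel_def)

lemma relcomp_inverse_unique: "R O S = Id \<Longrightarrow> S' O R = Id \<Longrightarrow> S' = S"
  by (metis O_assoc R_O_Id Id_O_R)

lemma rel_from_unit_eq_Times_Image: "(\<beta> :: (unit \<times> 'a) set) = {()} \<times> \<beta> `` {()}"
  by auto

lemma nondeg_eqs_iff_eq_converse_pairing:
  assumes "invertible_rel (pairing F m)"
  shows "nondeg_eqs (counit_rel F) (mult_rel m) \<beta> \<longleftrightarrow> \<beta> = {()} \<times> converse (pairing F m)"
proof
  assume "nondeg_eqs (counit_rel F) (mult_rel m) \<beta>"
  then have "\<beta> `` {()} O pairing F m = Id"
    by (simp add: nondeg_eqs_iff)
  then have "\<beta> `` {()} = converse (pairing F m)"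
    using assms relcomp_inverse_unique unfolding invertible_rel_def by metis
  then show "\<beta> = {()} \<times> converse (pairing F m)"
    by (metis rel_from_unit_eq_Times_Image)
next
  assume "\<beta> = {()} \<times> converse (pairing F m)"
  then have "\<beta> `` {()} = converse (pairing F m)"
    by auto
  then show "nondeg_eqs (counit_rel F) (mult_rel m) \<beta>"
    using assms by (simp add: nondeg_eqs_iff invertible_rel_def)
qed

lemma
  assumes "invertible_rel (pairing F m)"
  shows ex1_nondeg_eqs: "\<exists>!\<beta>. nondeg_eqs (counit_rel F) (mult_rel m) \<beta>"
    and frob_beta_eq_converse_pairing: "frob_beta (counit_rel F) (mult_rel m) = {()} \<times> converse (pairing F m)"
  by (simp_all add: nondeg_eqs_iff_eq_converse_pairing[OF assms] frob_beta_def)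

lemma handle_eq:
  assumes "invertible_rel (pairing F m)"
  shows "mult_rel m \<circ>r comult (counit_rel F) (mult_rel m)
           = {(x, z). \<exists>y w. (w, y) \<in> pairing F m \<and> (\<exists>u \<in> m w x. z \<in> m y u)}"
  by (auto simp: comult_def frob_beta_eq_converse_pairing[OF assms]) blast+

lemma counit_rel_rcomp_unit_rel_eq_T:
  "counit_rel F \<circ>r R \<circ>r unit_rel E = T\<^sub>Z \<longleftrightarrow> (\<exists>x\<in>E. \<exists>y\<in>F. (x, y) \<in> R)"
  by (auto simp: set_eq_iff)

lemma frobenius_object_mult_relI:
  assumes "\<forall>x. (\<Union>e\<in>E. m e x) = {x}" and "\<forall>x. (\<Union>e\<in>E. m x e) = {x}"
    and "\<forall>x y z. (\<Union>u\<in>m x y. m u z) = (\<Union>u\<in>m y z. m x u)"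
    and "invertible_rel (pairing F m)"
  shows "frobenius_object (unit_rel E) (counit_rel F) (mult_rel m)"
  using assms ex1_nondeg_eqs[OF assms(4)]
  by (simp add: frobenius_object_def mult_rel_left_unit_iff mult_rel_right_unit_iff mult_rel_assoc_iff)

lemma relpow_idempotent: "R O R = R \<Longrightarrow> R ^^ n = (if n = 0 then Id else R)"
  by (induction n) auto

lemma relpow_involution: "R O R = Id \<Longrightarrow> R ^^ n = (if even n then Id else R)"
  by (induction n) (auto simp: O_assoc)

lemma relpow_square_zero: "R O R = {} \<Longrightarrow> R ^^ n = (if n = 0 then Id else if n = 1 then R else {})"
  by (induction n) auto

lemma all_X2: "(\<forall>x. P x) \<longleftrightarrow> P A \<and> P B"
  by (metis X2.exhaust)

lemma ex_X2: "(\<exists>x. P x) \<longleftrightarrow> P A \<or> P B"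
  by (metis X2.exhaust)

lemmas X2_rel_simps = set_eq_iff split_paired_All split_paired_Ex all_X2 ex_X2

lemma pairing_m1: "pairing {A} m1 = Id"
  by (simp add: pairing_def m1_def X2_rel_simps)

lemma frobenius_object_m1: "frobenius_object (unit_rel {A}) (counit_rel {A}) (mult_rel m1)"
  by (rule frobenius_object_mult_relI) (simp_all add: pairing_m1 invertible_rel_Id m1_def all_X2)

lemma handle_m1: "mult_rel m1 \<circ>r comult (counit_rel {A}) (mult_rel m1) = Id"
  by (simp add: handle_eq pairing_m1 invertible_rel_Id m1_def X2_rel_simps)

lemma partition_fn_m1: "partition_fn (unit_rel {A}) (counit_rel {A}) (mult_rel m1) g = T\<^sub>Z"
  by (simp add: partition_fn_def handle_m1 relpow_idempotent counit_rel_rcomp_unit_rel_eq_T)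

lemma pairing_m2: "pairing {A} m2 = Id"
  by (simp add: pairing_def m2_def X2_rel_simps)

lemma frobenius_object_m2: "frobenius_object (unit_rel {A}) (counit_rel {A}) (mult_rel m2)"
  by (rule frobenius_object_mult_relI)
    (simp_all add: pairing_m2 invertible_rel_Id m2_def all_X2 insert_commute)

lemma handle_m2: "mult_rel m2 \<circ>r comult (counit_rel {A}) (mult_rel m2) = UNIV"
  by (simp add: handle_eq pairing_m2 invertible_rel_Id m2_def X2_rel_simps)

lemma partition_fn_m2: "partition_fn (unit_rel {A}) (counit_rel {A}) (mult_rel m2) g = T\<^sub>Z"
  by (simp add: partition_fn_def handle_m2 relpow_idempotent relcomp_unfold
      counit_rel_rcomp_unit_rel_eq_T)

lemma swap_X2_involution: "{(A, B), (B, A)} O {(A, B), (B, A)} = Id"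
  by (auto simp: X2_rel_simps)

lemma invertible_rel_swap_X2: "invertible_rel {(A, B), (B, A)}"
  by (auto simp: invertible_rel_def X2_rel_simps)

lemma pairing_m3: "pairing {B} m3 = {(A, B), (B, A)}"
  by (simp add: pairing_def m3_def X2_rel_simps)

lemma frobenius_object_m3: "frobenius_object (unit_rel {A}) (counit_rel {B}) (mult_rel m3)"
  by (rule frobenius_object_mult_relI) (simp_all add: pairing_m3 invertible_rel_swap_X2 m3_def all_X2)

lemma handle_m3: "mult_rel m3 \<circ>r comult (counit_rel {B}) (mult_rel m3) = {(A, B), (B, A)}"
  by (simp add: handle_eq pairing_m3 invertible_rel_swap_X2 m3_def X2_rel_simps)

lemma partition_fn_m3: "partition_fn (unit_rel {A}) (counit_rel {B}) (mult_rel m3) g = T\<^sub>Z \<longleftrightarrow> odd g"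
  by (simp add: partition_fn_def handle_m3 swap_X2_involution relpow_involution
      counit_rel_rcomp_unit_rel_eq_T)

lemma pairing_m4: "pairing {B} m4 = {(A, B), (B, A)}"
  by (simp add: pairing_def m4_def X2_rel_simps)

lemma frobenius_object_m4: "frobenius_object (unit_rel {A}) (counit_rel {B}) (mult_rel m4)"
  by (rule frobenius_object_mult_relI) (simp_all add: pairing_m4 invertible_rel_swap_X2 m4_def all_X2)

lemma handle_m4: "mult_rel m4 \<circ>r comult (counit_rel {B}) (mult_rel m4) = {(A, B)}"
  by (simp add: handle_eq pairing_m4 invertible_rel_swap_X2 m4_def X2_rel_simps)

lemma partition_fn_m4: "partition_fn (unit_rel {A}) (counit_rel {B}) (mult_rel m4) g = T\<^sub>Z \<longleftrightarrow> g = 1"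
  by (simp add: partition_fn_def handle_m4 relpow_square_zero relcomp_unfold
      counit_rel_rcomp_unit_rel_eq_T)

lemma pairing_m5: "pairing {A, B} m5 = Id"
  by (simp add: pairing_def m5_def X2_rel_simps)

lemma frobenius_object_m5: "frobenius_object (unit_rel {A, B}) (counit_rel {A, B}) (mult_rel m5)"
  by (rule frobenius_object_mult_relI) (simp_all add: pairing_m5 invertible_rel_Id m5_def all_X2)

lemma handle_m5: "mult_rel m5 \<circ>r comult (counit_rel {A, B}) (mult_rel m5) = Id"
  by (simp add: handle_eq pairing_m5 invertible_rel_Id m5_def X2_rel_simps)

lemma partition_fn_m5: "partition_fn (unit_rel {A, B}) (counit_rel {A, B}) (mult_rel m5) g = T\<^sub>Z"
  by (simp add: partition_fn_def handle_m5 relpow_idempotent counit_rel_rcomp_unit_rel_eq_T ex_X2)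

theorem mainTheorem5:
  shows
  \<comment> \<open>(1)\<close>
  "(frobenius_object (unit_rel {A}) (counit_rel {A}) (mult_rel m1) \<and> commutative_mult m1
     \<and> (\<forall>g. partition_fn (unit_rel {A}) (counit_rel {A}) (mult_rel m1) g = T\<^sub>Z))
  \<comment> \<open>(2)\<close>
   \<and> (frobenius_object (unit_rel {A}) (counit_rel {A}) (mult_rel m2) \<and> commutative_mult m2
     \<and> (\<forall>g. partition_fn (unit_rel {A}) (counit_rel {A}) (mult_rel m2) g = T\<^sub>Z))
  \<comment> \<open>(3)\<close>
   \<and> (frobenius_object (unit_rel {A}) (counit_rel {B}) (mult_rel m3) \<and> commutative_mult m3
     \<and> (\<forall>g. partition_fn (unit_rel {A}) (counit_rel {B}) (mult_rel m3) g = T\<^sub>Z \<longleftrightarrow> odd g))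
  \<comment> \<open>(4)\<close>
   \<and> (frobenius_object (unit_rel {A}) (counit_rel {B}) (mult_rel m4) \<and> commutative_mult m4
     \<and> (\<forall>g. partition_fn (unit_rel {A}) (counit_rel {B}) (mult_rel m4) g = T\<^sub>Z \<longleftrightarrow> g = 1))
  \<comment> \<open>(5)\<close>
   \<and> (frobenius_object (unit_rel {A,B}) (counit_rel {A,B}) (mult_rel m5) \<and> commutative_mult m5
     \<and> (\<forall>g. partition_fn (unit_rel {A,B}) (counit_rel {A,B}) (mult_rel m5) g = T\<^sub>Z))"
proof -
  have "commutative_mult m1" "commutative_mult m2" "commutative_mult m3"
    "commutative_mult m4" "commutative_mult m5"
    by (simp_all add: commutative_mult_def all_X2 m1_def m2_def m3_def m4_def m5_def)
  then show ?thesis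
    using frobenius_object_m1 frobenius_object_m2 frobenius_object_m3 frobenius_object_m4
      frobenius_object_m5 partition_fn_m1 partition_fn_m2 partition_fn_m3 partition_fn_m4
      partition_fn_m5
    by blast
qed

end
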